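(* A permutation $\varpi\in S_n$ is amenable if and only if $\varpi$ is vexillary, i.e. $2143$-avoiding.
   Context: $S_n$ is the symmetric group in one-line notation; $\ell$ denotes length (number of inversions). A permutation is $v$-avoiding if it contains no subword with the same relative order as $v$. The code of $\varpi$ is $\gamma_i:=\#\{j>i\mid\varpi_j<\varpi_i\}$, and $\varpi$ is dominant if its code is weakly decreasing (equivalently, $\varpi$ is $132$-avoiding). A (right) modification of $\varpi$ is $\varpi\omega$ with $\omega\in S_n$ $231$-avoiding and $\ell(\varpi\omega)=\ell(\varpi)-\ell(\omega)$. A permutation is amenable if it is a modification of a dominant permutation. *)

theory Defs
  imports "HOL-Combinatorics.Permutations"
begin

text \<open>Permutations of S_n are functions w :: nat => nat with w permutes {..<n};
  the one-line notation is w 0, w 1, ..., w (n-1) (0-based positions and values).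
  Products: (w o u) i = w (u i), so right multiplication by u acts on positions.\<close>

definition len :: "nat \<Rightarrow> (nat \<Rightarrow> nat) \<Rightarrow> nat" where
  "len n w = card {(i, j). i < j \<and> j < n \<and> w j < w i}"

definition perm_code :: "nat \<Rightarrow> (nat \<Rightarrow> nat) \<Rightarrow> nat \<Rightarrow> nat" where
  "perm_code n w i = card {j. i < j \<and> j < n \<and> w j < w i}"

definition contains_pattern :: "nat \<Rightarrow> (nat \<Rightarrow> nat) \<Rightarrow> nat list \<Rightarrow> bool" where
  "contains_pattern n w v \<longleftrightarrow>
     (\<exists>f :: nat \<Rightarrow> nat.
        (\<forall>a b. a < b \<and> b < length v \<longrightarrow> f a < f b) \<and>
        (\<forall>a < length v. f a < n) \<and>
        (\<forall>a < length v. \<forall>b < length v. (w (f a) < w (f b) \<longleftrightarrow> v ! a < v ! b)))"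

definition avoids :: "nat \<Rightarrow> (nat \<Rightarrow> nat) \<Rightarrow> nat list \<Rightarrow> bool" where
  "avoids n w v \<longleftrightarrow> \<not> contains_pattern n w v"

definition dominant :: "nat \<Rightarrow> (nat \<Rightarrow> nat) \<Rightarrow> bool" where
  "dominant n w \<longleftrightarrow> (\<forall>i j. i \<le> j \<and> j < n \<longrightarrow> perm_code n w j \<le> perm_code n w i)"

text \<open>231 in 0-based one-line notation is [1,2,0]; 2143 is [1,0,3,2].\<close>
definition modification :: "nat \<Rightarrow> (nat \<Rightarrow> nat) \<Rightarrow> (nat \<Rightarrow> nat) \<Rightarrow> bool" where
  "modification n d w \<longleftrightarrow>
     (\<exists>u. u permutes {..<n} \<and> avoids n u [1, 2, 0] \<and> w = d \<circ> u \<and>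
          len n (d \<circ> u) + len n u = len n d)"

definition amenable :: "nat \<Rightarrow> (nat \<Rightarrow> nat) \<Rightarrow> bool" where
  "amenable n w \<longleftrightarrow> (\<exists>d. d permutes {..<n} \<and> dominant n d \<and> modification n d w)"

definition vexillary :: "nat \<Rightarrow> (nat \<Rightarrow> nat) \<Rightarrow> bool" where
  "vexillary n w \<longleftrightarrow> avoids n w [1, 0, 3, 2]"

end

theory Submission
  imports Defs
begin

(* If w = d o u is a modification, length additivity says that no inversion of u is an
   inversion of w. So in an occurrence a < b < c < e of 2143 in w we get u a < u b and
   u c < u e. If u a < u c, then u a < u c < u e is a 132 in d, impossible for a dominant d;
   if u c < u a, then a, b, c is a 231 in u.

   Conversely, let w be vexillary and let reach i be the last position j such that
   w i, w j, w k is a 132 for some k > j (or i itself if there is none). Avoiding 2143 forces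
   w i < w k on (i, reach i] and makes the intervals [i, reach i] nested. Sorting the positions
   by reach, ties broken from right to left, therefore moves each i behind (i, reach i].
   The sorting permutation u avoids 231, only reverses pairs that w does not invert, and
   w o u^-1 avoids 132, i.e. it is dominant. *)

section \<open>Pattern occurrences\<close>

lemma contains_pattern_iff_positions:
  "contains_pattern n w v \<longleftrightarrow>
    (\<exists>xs. length xs = length v \<and> sorted_wrt (<) xs \<and> (\<forall>x\<in>set xs. x < n) \<and>
      (\<forall>a < length v. \<forall>b < length v. w (xs ! a) < w (xs ! b) \<longleftrightarrow> v ! a < v ! b))"
    (is "_ \<longleftrightarrow> ?positions")
proof
  assume "contains_pattern n w v"
  then obtain f where "\<forall>a b. a < b \<and> b < length v \<longrightarrow> f a < f b" "\<forall>a < length v. f a < n"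
    "\<forall>a < length v. \<forall>b < length v. w (f a) < w (f b) \<longleftrightarrow> v ! a < v ! b"
    unfolding contains_pattern_def by blast
  then show ?positions
    by (intro exI[of _ "map f [0..<length v]"]) (auto simp: sorted_wrt_iff_nth_less)
next
  assume ?positions
  then obtain xs where "length xs = length v" "sorted_wrt (<) xs" "\<forall>x\<in>set xs. x < n"
    "\<forall>a < length v. \<forall>b < length v. w (xs ! a) < w (xs ! b) \<longleftrightarrow> v ! a < v ! b"
    by blast
  then show "contains_pattern n w v"
    unfolding contains_pattern_def by (intro exI[of _ "(!) xs"]) (auto simp: sorted_wrt_iff_nth_less)
qed

lemma ex_list_length_Suc: "(\<exists>xs. length xs = Suc k \<and> P xs) \<longleftrightarrow> (\<exists>x xs. length xs = k \<and> P (x # xs))"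
  by (metis length_Suc_conv)

lemma contains_132:
  "contains_pattern n u [0,2,1] \<longleftrightarrow>
    (\<exists>a b c. a < b \<and> b < c \<and> c < n \<and> u a < u c \<and> u c < u b)" (is "_ \<longleftrightarrow> ?occurs")
proof
  assume "contains_pattern n u [0,2,1]"
  then show ?occurs
    by (simp add: contains_pattern_iff_positions ex_list_length_Suc numeral_eq_Suc All_less_Suc2) blast
next
  assume ?occurs
  then obtain a b c where "a < b" "b < c" "c < n" "u a < u c" "u c < u b" by blast
  then show "contains_pattern n u [0,2,1]"
    unfolding contains_pattern_iff_positions
    by (intro exI[of _ "[a, b, c]"]) (auto simp: numeral_eq_Suc All_less_Suc2)
qed

lemma contains_231:
  "contains_pattern n u [1,2,0] \<longleftrightarrow>
    (\<exists>a b c. a < b \<and> b < c \<and> c < n \<and> u c < u a \<and> u a < u b)" (is "_ \<longleftrightarrow> ?occurs")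
proof
  assume "contains_pattern n u [1,2,0]"
  then show ?occurs
    by (simp add: contains_pattern_iff_positions ex_list_length_Suc numeral_eq_Suc All_less_Suc2) blast
next
  assume ?occurs
  then obtain a b c where "a < b" "b < c" "c < n" "u c < u a" "u a < u b" by blast
  then show "contains_pattern n u [1,2,0]"
    unfolding contains_pattern_iff_positions
    by (intro exI[of _ "[a, b, c]"]) (auto simp: numeral_eq_Suc All_less_Suc2)
qed

lemma contains_2143:
  "contains_pattern n w [1,0,3,2] \<longleftrightarrow>
    (\<exists>a b c e. a < b \<and> b < c \<and> c < e \<and> e < n \<and> w b < w a \<and> w a < w e \<and> w e < w c)"
    (is "_ \<longleftrightarrow> ?occurs")
proof
  assume "contains_pattern n w [1,0,3,2]"
  then show ?occurs
    by (simp add: contains_pattern_iff_positions ex_list_length_Suc numeral_eq_Suc All_less_Suc2) blast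
next
  assume ?occurs
  then obtain a b c e where "a < b" "b < c" "c < e" "e < n" "w b < w a" "w a < w e" "w e < w c"
    by blast
  then show "contains_pattern n w [1,0,3,2]"
    unfolding contains_pattern_iff_positions
    by (intro exI[of _ "[a, b, c, e]"]) (auto simp: numeral_eq_Suc All_less_Suc2)
qed

lemma avoids_132D:
  "avoids n d [0,2,1] \<Longrightarrow> i < j \<Longrightarrow> j < k \<Longrightarrow> k < n \<Longrightarrow> d i < d k \<Longrightarrow> d k < d j \<Longrightarrow> False"
  unfolding avoids_def contains_132 by blast

lemma avoids_231D:
  "avoids n u [1,2,0] \<Longrightarrow> i < j \<Longrightarrow> j < k \<Longrightarrow> k < n \<Longrightarrow> u k < u i \<Longrightarrow> u i < u j \<Longrightarrow> False"
  unfolding avoids_def contains_231 by blast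

lemma vexillaryD:
  "vexillary n w \<Longrightarrow> a < b \<Longrightarrow> b < c \<Longrightarrow> c < e \<Longrightarrow> e < n \<Longrightarrow>
    w b < w a \<Longrightarrow> w a < w e \<Longrightarrow> w e < w c \<Longrightarrow> False"
  unfolding vexillary_def avoids_def contains_2143 by blast

section \<open>Inversions and length additivity\<close>

definition inversions :: "nat \<Rightarrow> (nat \<Rightarrow> nat) \<Rightarrow> (nat \<times> nat) set" where
  "inversions n w = {(i, j). i < j \<and> j < n \<and> w j < w i}"

lemma len_eq_card_inversions: "len n w = card (inversions n w)"
  by (simp add: len_def inversions_def)

lemma finite_inversions: "finite (inversions n w)"
  by (rule finite_subset[of _ "{..<n} \<times> {..<n}"]) (auto simp: inversions_def)

lemma len_reindex:
  assumes "u permutes {..<n}"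
  shows "len n d = card {(i, j). i < n \<and> j < n \<and> u i < u j \<and> d (u j) < d (u i)}"
    (is "_ = card ?P")
proof -
  have "inversions n d = map_prod u u ` ?P"
  proof
    show "inversions n d \<subseteq> map_prod u u ` ?P"
    proof
      fix p assume "p \<in> inversions n d"
      then obtain i j where "p = (i, j)" "i < j" "j < n" "d j < d i"
        by (auto simp: inversions_def)
      moreover have "inv u i < n" "inv u j < n" "u (inv u i) = i" "u (inv u j) = j"
        using \<open>i < j\<close> \<open>j < n\<close> permutes_in_image[OF permutes_inv[OF assms]]
          permutes_inverses(1)[OF assms] by auto
      ultimately show "p \<in> map_prod u u ` ?P"
        by (auto intro!: image_eqI[of _ _ "(inv u i, inv u j)"])
    qed
    show "map_prod u u ` ?P \<subseteq> inversions n d"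
      using permutes_in_image[OF assms] by (auto simp: inversions_def)
  qed
  moreover have "inj_on (map_prod u u) ?P"
    using permutes_inj[OF assms] by (auto intro: map_prod_inj_on simp: inj_on_def)
  ultimately show ?thesis
    by (simp add: len_eq_card_inversions card_image)
qed

lemma inversions_pullback:
  assumes u: "u permutes {..<n}" and d: "inj_on d {..<n}"
  shows "{(i, j). i < n \<and> j < n \<and> u i < u j \<and> d (u j) < d (u i)}
    = (inversions n (d \<circ> u) - inversions n u) \<union> prod.swap ` (inversions n u - inversions n (d \<circ> u))"
    (is "?P = ?only_du \<union> prod.swap ` ?only_u")
proof (intro equalityI subsetI)
  fix p assume "p \<in> ?P"
  then obtain i j where p: "p = (i, j)" "i < n" "j < n" "u i < u j" "d (u j) < d (u i)"
    by blast
  then consider "i < j" | "j < i"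
    by (metis less_irrefl linorder_neqE_nat)
  then show "p \<in> ?only_du \<union> prod.swap ` ?only_u"
  proof cases
    case 1
    with p show ?thesis by (auto simp: inversions_def)
  next
    case 2
    with p have "(j, i) \<in> ?only_u" by (auto simp: inversions_def)
    with p show ?thesis by (auto intro: image_eqI[of _ _ "(j, i)"])
  qed
next
  have u_less: "u i < n" if "i < n" for i
    using permutes_in_image[OF u] that by simp
  have u_eq: "u i = u j \<longleftrightarrow> i = j" if "i < n" "j < n" for i j
    using permutes_inj_on[OF u] that by (auto simp: inj_on_eq_iff)
  have d_eq: "d i = d j \<longleftrightarrow> i = j" if "i < n" "j < n" for i j
    using d that by (auto simp: inj_on_eq_iff)
  fix p assume "p \<in> ?only_du \<union> prod.swap ` ?only_u"
  then show "p \<in> ?P"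
  proof
    assume "p \<in> ?only_du"
    then obtain i j where "p = (i, j)" "i < j" "j < n" "d (u j) < d (u i)" "\<not> u j < u i"
      by (auto simp: inversions_def)
    moreover have "u i \<noteq> u j"
      using u_eq calculation by simp
    ultimately show ?thesis
      by auto
  next
    assume "p \<in> prod.swap ` ?only_u"
    then obtain i j where "p = (j, i)" "(i, j) \<in> ?only_u"
      by auto
    then have "p = (j, i)" "i < j" "j < n" "u j < u i" "\<not> d (u j) < d (u i)"
      by (auto simp: inversions_def)
    moreover have "d (u i) \<noteq> d (u j)"
      using u_eq d_eq u_less calculation by simp
    ultimately show ?thesis
      by auto
  qed
qed

lemma len_comp_add:
  assumes "u permutes {..<n}" and "inj_on d {..<n}"
  shows "len n (d \<circ> u) + len n u = len n d + 2 * card (inversions n u \<inter> inversions n (d \<circ> u))"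
proof -
  let ?common = "inversions n u \<inter> inversions n (d \<circ> u)"
  let ?only_du = "inversions n (d \<circ> u) - inversions n u"
  let ?only_u = "inversions n u - inversions n (d \<circ> u)"
  have "?only_du \<inter> prod.swap ` ?only_u = {}"
    by (auto simp: inversions_def)
  then have "len n d = card ?only_du + card ?only_u"
    using len_reindex[OF assms(1), of d] inversions_pullback[OF assms] finite_inversions
    by (simp add: card_Un_disjoint card_image)
  moreover have "len n (d \<circ> u) = card ?common + card ?only_du"
    using card_Int_Diff[OF finite_inversions] len_eq_card_inversions by (metis Int_commute)
  moreover have "len n u = card ?common + card ?only_u"
    using card_Int_Diff[OF finite_inversions] len_eq_card_inversions by metis
  ultimately show ?thesis
    by simp
qed

lemma len_comp_additive_iff:
  assumes "u permutes {..<n}" and "inj_on d {..<n}"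
  shows "len n (d \<circ> u) + len n u = len n d \<longleftrightarrow> inversions n u \<inter> inversions n (d \<circ> u) = {}"
  using len_comp_add[OF assms] finite_inversions by simp

lemma len_comp_additive_imp_less:
  assumes u: "u permutes {..<n}" and d: "inj_on d {..<n}"
    and additive: "len n (d \<circ> u) + len n u = len n d"
    and "i < j" "j < n" "d (u j) < d (u i)"
  shows "u i < u j"
proof -
  have "(i, j) \<notin> inversions n u"
    using assms(4-6) additive len_comp_additive_iff[OF u d] by (auto simp: inversions_def)
  moreover have "u i \<noteq> u j"
    using assms(4) permutes_inj[OF u] by (metis injD less_irrefl)
  ultimately show ?thesis
    using assms(4,5) by (auto simp: inversions_def)
qed

section \<open>Dominant permutations\<close>

lemma perm_code_increases_at_132:
  assumes ijk: "i < j" "j < k" "k < n" "d i < d k" "d k < d j"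
  obtains m where "m < j" "perm_code n d m < perm_code n d j"
proof -
  obtain m where m: "m \<in> {i..<j}" and m_min: "\<forall>l\<in>{i..<j}. d m \<le> d l"
    using ex_has_least_nat[of "\<lambda>l. l \<in> {i..<j}" i d] ijk by auto
  have "d m \<le> d i"
    using m_min ijk by simp
  have "{l. m < l \<and> l < n \<and> d l < d m} \<subseteq> {l. j < l \<and> l < n \<and> d l < d j}"
  proof (intro subsetI CollectI, elim CollectE conjE)
    fix l assume l: "m < l" "l < n" "d l < d m"
    have "l \<notin> {i..<j}"
      using m_min l leD by blast
    moreover have "l \<noteq> j"
      using l \<open>d m \<le> d i\<close> ijk by auto
    ultimately show "j < l \<and> l < n \<and> d l < d j"
      using l m \<open>d m \<le> d i\<close> ijk by auto
  qed
  moreover have "k \<in> {l. j < l \<and> l < n \<and> d l < d j} - {l. m < l \<and> l < n \<and> d l < d m}"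
    using \<open>d m \<le> d i\<close> ijk by auto
  ultimately have "perm_code n d m < perm_code n d j"
    unfolding perm_code_def by (intro psubset_card_mono) auto
  with m show thesis
    by (intro that[of m]) auto
qed

lemma dominant_imp_avoids_132:
  assumes "dominant n d"
  shows "avoids n d [0,2,1]"
  unfolding avoids_def contains_132
proof
  assume "\<exists>i j k. i < j \<and> j < k \<and> k < n \<and> d i < d k \<and> d k < d j"
  then obtain i j k where "i < j" "j < k" "k < n" "d i < d k" "d k < d j"
    by blast
  then obtain m where "m < j" "perm_code n d m < perm_code n d j"
    by (rule perm_code_increases_at_132)
  moreover have "perm_code n d j \<le> perm_code n d m"
    using assms \<open>m < j\<close> \<open>j < k\<close> \<open>k < n\<close> unfolding dominant_def by simp
  ultimately show False
    by simp
qed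

lemma avoids_132_imp_dominant:
  assumes inj: "inj_on d {..<n}" and "avoids n d [0,2,1]"
  shows "dominant n d"
  unfolding dominant_def perm_code_def
proof (intro allI impI card_mono subsetI)
  fix i j l assume ij: "i \<le> j \<and> j < n" and l: "l \<in> {l. j < l \<and> l < n \<and> d l < d j}"
  have "d l < d i"
  proof (cases "i = j")
    case False
    with ij have "i < j"
      by simp
    have "d i \<noteq> d j" "d l \<noteq> d i"
      using inj ij l False by (auto simp: inj_on_eq_iff)
    moreover have "\<not> (d i < d l \<and> d l < d j)"
      using avoids_132D[OF assms(2) \<open>i < j\<close>] l by auto
    ultimately show ?thesis
      using l by auto
  qed (use l in simp)
  then show "l \<in> {l. i < l \<and> l < n \<and> d l < d i}"
    using ij l by auto
qed auto

lemma dominant_iff_avoids_132: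
  assumes "inj_on d {..<n}"
  shows "dominant n d \<longleftrightarrow> avoids n d [0,2,1]"
  using dominant_imp_avoids_132 avoids_132_imp_dominant[OF assms] by blast

lemma amenable_imp_vexillary:
  assumes "amenable n w"
  shows "vexillary n w"
proof -
  obtain d u where d: "d permutes {..<n}" and "dominant n d" and u: "u permutes {..<n}"
    and u_231: "avoids n u [1,2,0]" and w: "w = d \<circ> u" and "len n (d \<circ> u) + len n u = len n d"
    using assms unfolding amenable_def modification_def by blast
  then have d_132: "avoids n d [0,2,1]"
    using dominant_iff_avoids_132[OF permutes_inj_on[OF d]] by simp
  have u_keeps: "u i < u j" if "i < j" "j < n" "w j < w i" for i j
    using len_comp_additive_imp_less[OF u permutes_inj_on[OF d] \<open>len n (d \<circ> u) + _ = _\<close>] that w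
    by simp
  show ?thesis
    unfolding vexillary_def avoids_def contains_2143
  proof
    assume "\<exists>a b c e. a < b \<and> b < c \<and> c < e \<and> e < n \<and> w b < w a \<and> w a < w e \<and> w e < w c"
    then obtain a b c e where abce: "a < b" "b < c" "c < e" "e < n" "w b < w a" "w a < w e" "w e < w c"
      by blast
    then have "u a < u b" "u c < u e"
      using u_keeps by auto
    have "u a \<noteq> u c"
      using permutes_inj[OF u] abce by (metis injD less_trans less_irrefl)
    then consider "u a < u c" | "u c < u a"
      by linarith
    then show False
    proof cases
      case 1
      have "u e < n"
        using permutes_in_image[OF u] abce by simp
      with 1 \<open>u c < u e\<close> abce show False
        by (intro avoids_132D[OF d_132, of "u a" "u c" "u e"]) (simp_all add: w)
    next
      case 2
      with \<open>u a < u b\<close> abce show False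
        by (intro avoids_231D[OF u_231, of a b c]) simp_all
    qed
  qed
qed

section \<open>Ranking along a strict linear order\<close>

definition order_rank :: "nat \<Rightarrow> (nat \<times> nat) set \<Rightarrow> nat \<Rightarrow> nat" where
  "order_rank n r i = (if i < n then card {m. m < n \<and> (m, i) \<in> r} else i)"

lemma order_rank_strict_mono:
  assumes "strict_linear_order_on {..<n} r" and "i < n" "k < n" "(i, k) \<in> r"
  shows "order_rank n r i < order_rank n r k"
proof -
  have "trans r" "irrefl r"
    using assms(1) by (auto simp: strict_linear_order_on_def)
  then have "{m. m < n \<and> (m, i) \<in> r} \<subset> {m. m < n \<and> (m, k) \<in> r}"
    using assms(2-4) by (auto dest: transD irreflD)
  then show ?thesis
    using assms(2,3) by (simp add: order_rank_def psubset_card_mono)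
qed

lemma order_rank_less_iff:
  assumes "strict_linear_order_on {..<n} r" and "i < n" "k < n"
  shows "order_rank n r i < order_rank n r k \<longleftrightarrow> (i, k) \<in> r"
proof
  assume less: "order_rank n r i < order_rank n r k"
  show "(i, k) \<in> r"
  proof (rule ccontr)
    assume "(i, k) \<notin> r"
    moreover have "i \<noteq> k"
      using less by auto
    ultimately have "(k, i) \<in> r"
      using assms by (auto simp: strict_linear_order_on_def total_on_def)
    with less show False
      using order_rank_strict_mono[OF assms(1,3,2)] by simp
  qed
qed (use order_rank_strict_mono[OF assms] in blast)

lemma order_rank_permutes:
  assumes "strict_linear_order_on {..<n} r"
  shows "order_rank n r permutes {..<n}"
proof (rule bij_imp_permutes)
  have irr: "irrefl r"
    using assms by (simp add: strict_linear_order_on_def)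
  have "order_rank n r i < n" if "i < n" for i
  proof -
    have "card {m. m < n \<and> (m, i) \<in> r} \<le> card ({..<n} - {i})"
      using irr by (intro card_mono) (auto dest: irreflD)
    with that show ?thesis
      by (simp add: order_rank_def)
  qed
  moreover have "inj_on (order_rank n r) {..<n}"
    using order_rank_less_iff[OF assms] assms
    by (intro inj_onI) (metis lessThan_iff less_irrefl strict_linear_order_on_def total_on_def)
  ultimately show "bij_betw (order_rank n r) {..<n} {..<n}"
    by (simp add: bij_betw_def endo_inj_surj image_subset_iff)
qed (simp add: order_rank_def)

section \<open>The reach of a position\<close>

definition reach :: "nat \<Rightarrow> (nat \<Rightarrow> nat) \<Rightarrow> nat \<Rightarrow> nat" where
  "reach n w i = Max (insert i {j. i < j \<and> j < n \<and> (\<exists>k. j < k \<and> k < n \<and> w i < w k \<and> w k < w j)})"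

lemma finite_reach_candidates:
  fixes n i :: nat and w :: "nat \<Rightarrow> nat"
  shows "finite (insert i {j. i < j \<and> j < n \<and> (\<exists>k. j < k \<and> k < n \<and> w i < w k \<and> w k < w j)})"
  by (rule finite_subset[of _ "insert i {..<n}"]) auto

lemma reach_ge: "i \<le> reach n w i"
  unfolding reach_def by (intro Max_ge finite_reach_candidates) simp

lemma reach_maximal:
  "i < j \<Longrightarrow> j < k \<Longrightarrow> k < n \<Longrightarrow> w i < w k \<Longrightarrow> w k < w j \<Longrightarrow> j \<le> reach n w i"
  unfolding reach_def by (intro Max_ge finite_reach_candidates) auto

lemma reach_132:
  assumes "i < reach n w i"
  obtains k where "reach n w i < k" "k < n" "w i < w k" "w k < w (reach n w i)"
proof -
  have "reach n w i \<in> insert i {j. i < j \<and> j < n \<and> (\<exists>k. j < k \<and> k < n \<and> w i < w k \<and> w k < w j)}"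
    unfolding reach_def by (intro Max_in finite_reach_candidates) simp
  with assms that show ?thesis
    by auto
qed

definition reach_order :: "nat \<Rightarrow> (nat \<Rightarrow> nat) \<Rightarrow> (nat \<times> nat) set" where
  "reach_order n w = {(i, k). reach n w i < reach n w k \<or> (reach n w i = reach n w k \<and> k < i)}"

abbreviation reach_rank :: "nat \<Rightarrow> (nat \<Rightarrow> nat) \<Rightarrow> nat \<Rightarrow> nat" where
  "reach_rank n w \<equiv> order_rank n (reach_order n w)"

lemma strict_linear_order_reach_order: "strict_linear_order_on A (reach_order n w)"
  unfolding strict_linear_order_on_def reach_order_def
  by (auto simp: trans_def irrefl_def total_on_def)

lemma reach_rank_less_iff:
  "i < n \<Longrightarrow> k < n \<Longrightarrow> reach_rank n w i < reach_rank n w k \<longleftrightarrow> (i, k) \<in> reach_order n w"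
  by (rule order_rank_less_iff[OF strict_linear_order_reach_order])

lemma reach_rank_permutes: "reach_rank n w permutes {..<n}"
  by (rule order_rank_permutes[OF strict_linear_order_reach_order])

lemma reach_order_imp_le_reach:
  "(k, i) \<in> reach_order n w \<Longrightarrow> i < k \<Longrightarrow> k \<le> reach n w i"
  using reach_ge[of k n w] by (auto simp: reach_order_def)

context
  fixes n :: nat and w :: "nat \<Rightarrow> nat"
  assumes perm: "w permutes {..<n}" and vex: "vexillary n w"
begin

lemma less_reach_imp_less:
  assumes "i < k" "k \<le> reach n w i"
  shows "w i < w k"
proof -
  obtain k' where k': "reach n w i < k'" "k' < n" "w i < w k'" "w k' < w (reach n w i)"
    using assms reach_132 by (metis order.strict_trans2)
  show ?thesis
  proof (cases "k = reach n w i")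
    case False
    have "w k \<noteq> w i"
      using assms permutes_inj[OF perm] by (metis injD less_irrefl)
    moreover have "\<not> w k < w i"
      using vexillaryD[OF vex, of i k "reach n w i" k'] assms False k' by auto
    ultimately show ?thesis
      by simp
  qed (use k' in simp)
qed

lemma reach_nested:
  assumes "i < k" "k \<le> reach n w i"
  shows "reach n w k \<le> reach n w i"
proof (cases "k < reach n w k")
  case True
  then obtain k' where "reach n w k < k'" "k' < n" "w k < w k'" "w k' < w (reach n w k)"
    by (rule reach_132)
  moreover have "w i < w k"
    using less_reach_imp_less[OF assms] .
  ultimately show ?thesis
    using assms True by (intro reach_maximal[of _ _ k']) auto
next
  case False
  with assms show ?thesis
    using reach_ge[of k n w] by simp
qed

lemma reach_order_iff:
  assumes "i < k"
  shows "(k, i) \<in> reach_order n w \<longleftrightarrow> k \<le> reach n w i"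
    and "(i, k) \<in> reach_order n w \<longleftrightarrow> reach n w i < k"
proof -
  show later_first: "(k, i) \<in> reach_order n w \<longleftrightarrow> k \<le> reach n w i"
  proof
    assume "k \<le> reach n w i"
    with assms have "reach n w k \<le> reach n w i"
      by (rule reach_nested)
    with assms show "(k, i) \<in> reach_order n w"
      by (auto simp: reach_order_def)
  qed (use assms reach_order_imp_le_reach in blast)
  have "(i, k) \<in> reach_order n w \<longleftrightarrow> (k, i) \<notin> reach_order n w"
    using assms by (auto simp: reach_order_def)
  with later_first show "(i, k) \<in> reach_order n w \<longleftrightarrow> reach n w i < k"
    by (simp add: not_le)
qed

lemma reach_order_reversal_imp_less:
  "(k, i) \<in> reach_order n w \<Longrightarrow> i < k \<Longrightarrow> w i < w k"
  using reach_order_iff(1) less_reach_imp_less by blast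

lemma reach_order_ascent_imp_less:
  assumes "(p, q) \<in> reach_order n w" "w p < w q"
  shows "p < q"
proof (rule ccontr)
  assume "\<not> p < q"
  with assms have "q < p"
    by (metis linorder_neqE_nat less_irrefl)
  with assms show False
    using reach_order_reversal_imp_less by fastforce
qed

lemma reach_order_no_132:
  assumes pq: "(p, q) \<in> reach_order n w" and qr: "(q, r) \<in> reach_order n w"
    and "w p < w r" "w r < w q" "r < n"
  shows False
proof -
  have pr: "(p, r) \<in> reach_order n w"
    using pq qr strict_linear_order_reach_order[of UNIV n w]
    by (auto simp: strict_linear_order_on_def dest: transD)
  have "p < q" "p < r"
    using pq pr assms(3,4) by (auto intro: reach_order_ascent_imp_less)
  have "reach n w p < q"
    using pq reach_order_iff(2)[OF \<open>p < q\<close>] by simp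
  have "q \<noteq> r"
    using assms(4) by auto
  then consider "q < r" | "r < q"
    by linarith
  then show False
  proof cases
    case 1
    with \<open>p < q\<close> assms(3-5) have "q \<le> reach n w p"
      by (intro reach_maximal) (auto intro: order.strict_trans)
    with \<open>reach n w p < q\<close> show False
      by simp
  next
    case 2
    with qr have "q \<le> reach n w r"
      using reach_order_iff(1) by blast
    with 2 have "r < reach n w r"
      by simp
    then obtain k where k: "reach n w r < k" "k < n" "w r < w k" "w k < w (reach n w r)"
      by (rule reach_132)
    with \<open>p < r\<close> \<open>r < q\<close> \<open>q \<le> reach n w r\<close> assms(3) have "reach n w r \<le> reach n w p"
      by (intro reach_maximal) auto
    with \<open>reach n w p < q\<close> \<open>q \<le> reach n w r\<close> show False
      by simp
  qed
qed

lemma reach_rank_avoids_231: "avoids n (reach_rank n w) [1,2,0]"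
  unfolding avoids_def contains_231
proof
  assume "\<exists>a b c. a < b \<and> b < c \<and> c < n \<and> reach_rank n w c < reach_rank n w a
    \<and> reach_rank n w a < reach_rank n w b"
  then obtain a b c where abc: "a < b" "b < c" "c < n"
    "reach_rank n w c < reach_rank n w a" "reach_rank n w a < reach_rank n w b"
    by blast
  then have "(c, a) \<in> reach_order n w" "(a, b) \<in> reach_order n w"
    using reach_rank_less_iff by simp_all
  with abc have "c \<le> reach n w a" "reach n w a < b"
    using reach_order_iff[of a c] reach_order_iff[of a b] by simp_all
  with abc show False
    by simp
qed

lemma inversions_reach_rank_disjoint:
  "inversions n (reach_rank n w) \<inter> inversions n w = {}"
proof -
  have False if "i < j" "j < n" "reach_rank n w j < reach_rank n w i" "w j < w i" for i j
  proof -
    have "(j, i) \<in> reach_order n w"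
      using that reach_rank_less_iff by simp
    then have "w i < w j"
      using that(1) by (rule reach_order_reversal_imp_less)
    with that(4) show False
      by simp
  qed
  then show ?thesis
    by (auto simp: inversions_def)
qed

lemma comp_inv_reach_rank_avoids_132: "avoids n (w \<circ> inv (reach_rank n w)) [0,2,1]"
  unfolding avoids_def contains_132
proof
  let ?u = "reach_rank n w"
  assume "\<exists>a b c. a < b \<and> b < c \<and> c < n \<and> (w \<circ> inv ?u) a < (w \<circ> inv ?u) c
    \<and> (w \<circ> inv ?u) c < (w \<circ> inv ?u) b"
  then obtain a b c where abc: "a < b" "b < c" "c < n" "w (inv ?u a) < w (inv ?u c)"
    "w (inv ?u c) < w (inv ?u b)"
    by auto
  have inv_less: "inv ?u x < n" and u_inv: "?u (inv ?u x) = x" if "x < n" for x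
    using that permutes_in_image[OF permutes_inv[OF reach_rank_permutes]]
      permutes_inverses(1)[OF reach_rank_permutes] by auto
  have in_order: "(inv ?u x, inv ?u y) \<in> reach_order n w" if "x < y" "y < n" for x y
    using reach_rank_less_iff[of "inv ?u x" n "inv ?u y" w]
      that inv_less u_inv by simp
  have "(inv ?u a, inv ?u b) \<in> reach_order n w" "(inv ?u b, inv ?u c) \<in> reach_order n w"
    using abc by (auto intro: in_order)
  with abc inv_less show False
    by (intro reach_order_no_132[of "inv ?u a" "inv ?u b" "inv ?u c"]) auto
qed

lemma vexillary_imp_amenable: "amenable n w"
proof -
  let ?u = "reach_rank n w"
  let ?d = "w \<circ> inv ?u"
  have u: "?u permutes {..<n}"
    by (rule reach_rank_permutes)
  then have d: "?d permutes {..<n}"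
    using perm by (rule permutes_compose[OF permutes_inv])
  have w: "w = ?d \<circ> ?u"
    using permutes_inv_o(2)[OF u] by (simp add: comp_assoc)
  have "len n (?d \<circ> ?u) + len n ?u = len n ?d"
    using len_comp_additive_iff[OF u permutes_inj_on[OF d]] inversions_reach_rank_disjoint w
    by (simp add: Int_commute)
  moreover have "dominant n ?d"
    using dominant_iff_avoids_132[OF permutes_inj_on[OF d]] comp_inv_reach_rank_avoids_132 by simp
  ultimately show ?thesis
    unfolding amenable_def modification_def
    using d u w reach_rank_avoids_231 by blast
qed

end

theorem theorem2:
  fixes n :: nat and w :: "nat \<Rightarrow> nat"
  assumes "w permutes {..<n}"
  shows "amenable n w \<longleftrightarrow> vexillary n w"
  using amenable_imp_vexillary vexillary_imp_amenable[OF assms] by blast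

end
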